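(* Let $h,h'\in\mathbf N$, $w=x_1\cdots x_k\in\{x,y\}^*$, $s$ a right-infinite and $s'$ a left-infinite word over $\{x,y\}$ such that ${}^ts=s'\,x\,y^{h'}\,x\,w$ and ${}^ts'=w\,y\,x^h\,y\,s$, and suppose the frontier $f=s'\,x y^{h'} x\,w\,y x^h y\,s$ is admissible. Embed $f$ and let $t$ be the $SL_2$-tiling with values in $\mathbf N$ extending it. Let $P_0,\dots,P_k$ be the successive path points along the factor $w$ (so $P_0$ precedes $x_1$, $P_j$ lies between $x_j$ and $x_{j+1}$, $P_k$ follows $x_k$), and $b(j,n)=t(P_j+n(1,-1))$. Let $I$ be the path point between $x^h$ and the following $y$ in $yx^hy$, $I'$ the path point between the first $x$ and $y^{h'}$ in $xy^{h'}x$, $J=I+(0,-1)$, $K=I+(0,-2)$, $J'=I'+(1,0)$, $K'=I'+(2,0)$, and put $i_n=t(I+n(1,0))$, $i'_n=t(I'+n(0,-1))$, $j_n=t(J+n(1,-1))$, $k_n=t(K+n(1,-1))$, $j'_n=t(J'+n(1,-1))$, $k'_n=t(K'+n(1,-1))$. Then for all $n\in\mathbf N$: $j_n=(h+1)i_n^2$, $k_n+1=(h+1)i_ni_{n+1}$, $j'_n=(h'+1){i'_n}^2$, $k'_n+1=(h'+1)i'_ni'_{n+1}$; and for $j=1,\dots,k-1$, $b(j,n)b(j,n+1)=1+B$ where $B=b(j-1,n+1)b(j+1,n)$ if $x_jx_{j+1}=xx$; $B=b(j-1,n+1)b(j+1,n+1)$ if $x_jx_{j+1}=xy$; $B=b(j-1,n)b(j+1,n)$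 if $x_jx_{j+1}=yx$; $B=b(j-1,n)b(j+1,n+1)$ if $x_jx_{j+1}=yy$.
   Context: Cartesian coordinates on $\mathbf Z^2$. The transpose ${}^tw$ of a word reverses it and exchanges $x$ and $y$ (transposes of right-infinite words are left-infinite and vice versa). A frontier is a bi-infinite word over $\{x,y\}$, admissible if neither half is ultimately constant; it is embedded as lattice points with each letter $x$ a step $(1,0)$ and each letter $y$ a step $(0,1)$. The extending $SL_2$-tiling is the unique $t:\mathbf Z^2\to\mathbf N$ with $t(a,b+1)t(a+1,b)-t(a,b)t(a+1,b+1)=1$ for all $(a,b)$ and $t=1$ on the path points. *)

theory Defs
  imports Main
begin

datatype letter = X | Y

fun swap_letter :: "letter \<Rightarrow> letter" where
  "swap_letter X = Y" | "swap_letter Y = X"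

text \<open>A right-infinite word s is a function nat => letter, s 0 being its
first (leftmost) letter. A left-infinite word s' is a function nat => letter, s' 0 being
its last (rightmost) letter, s' 1 the one before, etc.
The transpose reverses and exchanges x and y; with these conventions the transpose of a
right-infinite word s is the left-infinite word whose i-th letter from the right is
swap (s i), and symmetrically. Hence in both directions it is pointwise swapping.\<close>
definition transp :: "(nat \<Rightarrow> letter) \<Rightarrow> (nat \<Rightarrow> letter)" where
  "transp s = (\<lambda>i. swap_letter (s i))"

definition prepend_fin :: "letter list \<Rightarrow> (nat \<Rightarrow> letter) \<Rightarrow> (nat \<Rightarrow> letter)" where
  "prepend_fin v s = (\<lambda>i. if i < length v then v ! i else s (i - length v))"

definition append_fin :: "(nat \<Rightarrow> letter) \<Rightarrow> letter list \<Rightarrow> (nat \<Rightarrow> letter)" where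
  "append_fin s' u = (\<lambda>i. if i < length u then rev u ! i else s' (i - length u))"

text \<open>The bi-infinite word s' m s, indexed by int so that m ! 0 is at position 0.\<close>
definition frontier :: "(nat \<Rightarrow> letter) \<Rightarrow> letter list \<Rightarrow> (nat \<Rightarrow> letter) \<Rightarrow> (int \<Rightarrow> letter)" where
  "frontier s' m s = (\<lambda>i. if 0 \<le> i then prepend_fin m s (nat i) else s' (nat (- i - 1)))"

definition admissible :: "(int \<Rightarrow> letter) \<Rightarrow> bool" where
  "admissible f \<longleftrightarrow> \<not> (\<exists>N c. \<forall>i\<ge>N. f i = c) \<and> \<not> (\<exists>N c. \<forall>i\<le>N. f i = c)"

text \<open>Path point p lies between letters f (p-1) and f p.\<close>
definition path_pt :: "(int \<Rightarrow> letter) \<Rightarrow> int \<Rightarrow> int \<times> int" where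
  "path_pt f p = (if 0 \<le> p
     then (int (card {j. 0 \<le> j \<and> j < p \<and> f j = X}), int (card {j. 0 \<le> j \<and> j < p \<and> f j = Y}))
     else (- int (card {j. p \<le> j \<and> j < 0 \<and> f j = X}), - int (card {j. p \<le> j \<and> j < 0 \<and> f j = Y})))"

definition shift :: "int \<times> int \<Rightarrow> int \<Rightarrow> int \<Rightarrow> int \<times> int" where
  "shift P dx dy = (fst P + dx, snd P + dy)"

definition is_ext_tiling :: "(int \<Rightarrow> letter) \<Rightarrow> (int \<times> int \<Rightarrow> nat) \<Rightarrow> bool" where
  "is_ext_tiling f t \<longleftrightarrow>
     (\<forall>a b. t (a, b + 1) * t (a + 1, b) = t (a, b) * t (a + 1, b + 1) + 1) \<and>
     (\<forall>p. t (path_pt f p) = 1)"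

end

theory Submission
  imports Defs
begin

text \<open>
  The proof rests on the hook formula of Assem, Reutenauer and Smith: to each letter we attach
  an elementary integer matrix (x to [[1,0],[1,1]], y to [[1,1],[0,1]]), and the value of the
  tiling at the lattice point with the x-coordinate of the end and the y-coordinate of the start
  of a factor of the frontier is the upper-left entry of the product of the matrices of the
  factor (lemma hook_formula, proved by induction on the length using the SL2 relation).

  The hypotheses on s and s' say that the frontier is mirrored (left side = transpose of right
  side) about the factor y x^h y and also about x y^h' x. Under such a symmetry the words whose
  hooks end on the diagonals below the centre have the shape W^t c W; their matrix entries are
  computed explicitly (lemma mirrored_center_values), which gives the four identities for the
  sequences j, k, j', k' (lemmas center_Y_diagonals and center_X_diagonals). Admissibility
  supplies enough x's to reach every diagonal index n. The relations for b are just the SL2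
  relation on the unit squares along consecutive path points (lemma diagonal_exchange).
\<close>

lemma finite_int_segment_filter: "finite {j::int. a \<le> j \<and> j < b \<and> P j}"
  by (rule finite_subset[of _ "{a..<b}"]) auto

text \<open>The negative branch of the definition of path points also holds at index 0, which
lets the two branches be treated uniformly when stepping from p to p + 1.\<close>
lemma path_pt_nonpos:
  "q \<le> 0 \<Longrightarrow> path_pt f q =
     (- int (card {j. q \<le> j \<and> j < 0 \<and> f j = X}), - int (card {j. q \<le> j \<and> j < 0 \<and> f j = Y}))"
proof (cases "q = 0")
  case True
  have "{j::int. 0 \<le> j \<and> j < 0 \<and> f j = c} = {}" for c by auto
  then show ?thesis using True by (simp only: path_pt_def) simp
qed (auto simp: path_pt_def)

lemma path_pt_step:
  "path_pt f (p + 1) = (if f p = X then (fst (path_pt f p) + 1, snd (path_pt f p))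
                        else (fst (path_pt f p), snd (path_pt f p) + 1))"
proof (cases "p \<ge> 0")
  case True
  have "card {j. 0 \<le> j \<and> j < p + 1 \<and> f j = c} = (if f p = c then 1 else 0) + card {j. 0 \<le> j \<and> j < p \<and> f j = c}"
    for c
  proof -
    have "{j. 0 \<le> j \<and> j < p + 1 \<and> f j = c} = (if f p = c then insert p else id) {j. 0 \<le> j \<and> j < p \<and> f j = c}"
      using True by (auto simp: le_less)
    then show ?thesis using finite_int_segment_filter[of 0 p] by auto
  qed
  then show ?thesis using True by (cases "f p") (auto simp: path_pt_def)
next
  case False
  have "card {j. p \<le> j \<and> j < 0 \<and> f j = c} = (if f p = c then 1 else 0) + card {j. p + 1 \<le> j \<and> j < 0 \<and> f j = c}"
    for c
  proof -
    have "{j. p \<le> j \<and> j < 0 \<and> f j = c} = (if f p = c then insert p else id) {j. p + 1 \<le> j \<and> j < 0 \<and> f j = c}"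
      using False by (auto simp: le_less)
    then show ?thesis using finite_int_segment_filter[of "p + 1" 0] by auto
  qed
  then show ?thesis using False path_pt_nonpos[of p f] path_pt_nonpos[of "p + 1" f]
    by (cases "f p") auto
qed

definition factor :: "(int \<Rightarrow> letter) \<Rightarrow> int \<Rightarrow> nat \<Rightarrow> letter list" where
  "factor f i d = map (\<lambda>q. f (i + int q)) [0..<d]"

lemma factor_0 [simp]: "factor f i 0 = []"
  by (simp add: factor_def)

lemma length_factor [simp]: "length (factor f i d) = d"
  by (simp add: factor_def)

lemma nth_factor: "q < d \<Longrightarrow> factor f i d ! q = f (i + int q)"
  by (simp add: factor_def)

lemma factor_snoc: "factor f i (Suc d) = factor f i d @ [f (i + int d)]"
  by (simp add: factor_def)

lemma factor_Cons: "factor f i (Suc d) = f i # factor f (i + 1) d"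
  unfolding factor_def by (induct d) (auto simp: algebra_simps)

lemma factor_add: "factor f i (a + b) = factor f i a @ factor f (i + int a) b"
  by (induct b) (auto simp: factor_snoc algebra_simps)

lemma path_pt_add:
  "path_pt f (i + int d) = (fst (path_pt f i) + int (count_list (factor f i d) X),
                           snd (path_pt f i) + int (count_list (factor f i d) Y))"
proof (induct d)
  case (Suc d)
  have e: "i + int (Suc d) = (i + int d) + 1" by simp
  show ?case unfolding e using Suc path_pt_step[of f "i + int d"]
    by (cases "f (i + int d)") (simp_all add: factor_snoc)
qed simp

text \<open>Integer 2x2 matrices (a,b,c,d) = [[a,b],[c,d]]. Each letter is an elementary matrix;
a word is sent to the product of the matrices of its letters.\<close>
type_synonym mat2 = "int \<times> int \<times> int \<times> int"

fun mat_mul :: "mat2 \<Rightarrow> mat2 \<Rightarrow> mat2" where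
  "mat_mul (a, b, c, d) (e, f, g, h) = (a*e + b*g, a*f + b*h, c*e + d*g, c*f + d*h)"

fun mat_det :: "mat2 \<Rightarrow> int" where
  "mat_det (a, b, c, d) = a*d - b*c"

fun mat_transpose :: "mat2 \<Rightarrow> mat2" where
  "mat_transpose (a, b, c, d) = (a, c, b, d)"

fun letter_mat :: "letter \<Rightarrow> mat2" where
  "letter_mat X = (1, 0, 1, 1)"
| "letter_mat Y = (1, 1, 0, 1)"

fun word_mat :: "letter list \<Rightarrow> mat2" where
  "word_mat [] = (1, 0, 0, 1)"
| "word_mat (l # ls) = mat_mul (letter_mat l) (word_mat ls)"

text \<open>The upper-left entry of the matrix of a word; it will be the tiling value at the
corner of the hook spanned by the word.\<close>
definition top_entry :: "letter list \<Rightarrow> int" where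
  "top_entry v = fst (word_mat v)"

lemma mat_mul_assoc: "mat_mul (mat_mul A B) C = mat_mul A (mat_mul B C)"
  by (cases A; cases B; cases C) (simp add: algebra_simps)

lemma mat_mul_id: "mat_mul (1, 0, 0, 1) A = A" "mat_mul A (1, 0, 0, 1) = A"
  by (cases A; simp)+

lemma word_mat_append: "word_mat (u @ v) = mat_mul (word_mat u) (word_mat v)"
  by (induct u) (auto simp: mat_mul_id mat_mul_assoc)

lemma mat_det_mul: "mat_det (mat_mul A B) = mat_det A * mat_det B"
  by (cases A; cases B) (simp add: algebra_simps)

lemma mat_det_word_mat: "mat_det (word_mat v) = 1"
proof (induct v)
  case (Cons l v) then show ?case by (cases l) (simp_all add: mat_det_mul)
qed simp

lemma mat_transpose_mul: "mat_transpose (mat_mul A B) = mat_mul (mat_transpose B) (mat_transpose A)"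
  by (cases A; cases B) (simp add: algebra_simps)

lemma word_mat_transp: "word_mat (rev (map swap_letter v)) = mat_transpose (word_mat v)"
proof (induct v)
  case (Cons l v)
  have "letter_mat (swap_letter l) = mat_transpose (letter_mat l)" by (cases l) auto
  then show ?case using Cons by (simp add: word_mat_append mat_transpose_mul mat_mul_id)
qed simp

lemma top_entry_Nil [simp]: "top_entry [] = 1"
  by (simp add: top_entry_def)

lemma top_entry_X_Cons: "top_entry (X # v) = top_entry v"
  by (cases "word_mat v") (simp add: top_entry_def)

lemma top_entry_snoc_Y: "top_entry (v @ [Y]) = top_entry v"
  by (cases "word_mat v") (simp add: top_entry_def word_mat_append)

lemma top_entry_transp: "top_entry (rev (map swap_letter v)) = top_entry v"
  by (cases "word_mat v") (simp add: top_entry_def word_mat_transp)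

text \<open>The unimodular exchange relation satisfied by the top entries of the four
subwords of a word y u x: this is the SL2 relation of a unit square.\<close>
lemma top_entry_exchange:
  "top_entry u * top_entry (Y # u @ [X]) = top_entry (Y # u) * top_entry (u @ [X]) + 1"
proof -
  obtain p q r s where M: "word_mat u = (p, q, r, s)" by (cases "word_mat u") auto
  have "p*s - q*r = 1" using mat_det_word_mat[of u] M by simp
  then show ?thesis by (simp add: top_entry_def word_mat_append M algebra_simps)
qed

lemma tiling_square_determined:
  fixes t :: "int \<times> int \<Rightarrow> nat"
  assumes rel: "t (a, b + 1) * t (a + 1, b) = t (a, b) * t (a + 1, b + 1) + 1"
    and "int (t (a, b + 1)) = g0" "int (t (a, b)) = g1" "int (t (a + 1, b + 1)) = g2"
    and ex: "g0 * g3 = g1 * g2 + 1"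
  shows "int (t (a + 1, b)) = g3"
proof -
  have "int (t (a, b + 1)) * int (t (a + 1, b)) = int (t (a, b)) * int (t (a + 1, b + 1)) + 1"
    using arg_cong[OF rel, of int] by simp
  then have "g0 * int (t (a + 1, b)) = g0 * g3" using assms(2-4) ex by simp
  moreover have "g0 \<noteq> 0" using rel assms(2) by auto
  ultimately show ?thesis by simp
qed

lemma factor_shapes:
  obtains "d = 0" | d' where "d = Suc d'" "f p = X"
    | d' where "d = Suc d'" "f (p + int d') = Y"
    | e where "d = Suc (Suc e)" "f p = Y" "f (p + 1 + int e) = X"
proof (cases d)
  case (Suc d')
  show ?thesis
  proof (cases "f p"; cases "f (p + int d')")
    assume "f p = Y" "f (p + int d') = X"
    then obtain e where "d' = Suc e" by (cases d') auto
    then show ?thesis using that(4) Suc \<open>f p = Y\<close> \<open>f (p + int d') = X\<close> by (simp add: add_ac)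
  qed (use that Suc in auto)
qed (use that in auto)

text \<open>Induction on d: a leading x or trailing y does not move the corner, and a factor y u x is
handled by the unit square whose other three corners come from shorter factors.\<close>
lemma hook_formula:
  assumes "is_ext_tiling f t"
  shows "int (t (fst (path_pt f (p + int d)), snd (path_pt f p))) = top_entry (factor f p d)"
proof (induct d arbitrary: p rule: less_induct)
  case (less d p)
  have rel: "t (a, b + 1) * t (a + 1, b) = t (a, b) * t (a + 1, b + 1) + 1" for a b
    using assms by (simp add: is_ext_tiling_def)
  consider "d = 0" | d' where "d = Suc d'" "f p = X"
    | d' where "d = Suc d'" "f (p + int d') = Y"
    | e where "d = Suc (Suc e)" "f p = Y" "f (p + 1 + int e) = X"
    by (rule factor_shapes)
  then show ?case
  proof cases
    case 1
    then show ?thesis using assms by (simp add: is_ext_tiling_def)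
  next
    case (2 d')
    have "snd (path_pt f (p + 1)) = snd (path_pt f p)" using path_pt_step[of f p] 2 by simp
    moreover have "p + int d = (p + 1) + int d'" using 2 by simp
    ultimately show ?thesis using less[of d' "p + 1"] 2
      by (simp only:) (simp add: factor_Cons top_entry_X_Cons)
  next
    case (3 d')
    have "fst (path_pt f (p + int d)) = fst (path_pt f (p + int d'))"
      using path_pt_step[of f "p + int d'"] 3 by (simp add: add_ac)
    then show ?thesis using less[of d' p] 3 by (simp add: factor_snoc top_entry_snoc_Y)
  next
    case (4 e)
    define u where "u = factor f (p + 1) e"
    define a where "a = fst (path_pt f (p + 1 + int e))"
    define b where "b = snd (path_pt f p)"
    have yb: "snd (path_pt f (p + 1)) = b + 1" using path_pt_step[of f p] 4 b_def by simp
    have xa: "fst (path_pt f (p + int d)) = a + 1"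
      using path_pt_step[of f "p + 1 + int e"] 4 a_def by (simp add: add_ac)
    have xa': "fst (path_pt f (p + int (Suc e))) = a" using a_def by (simp add: add_ac)
    have xa1: "fst (path_pt f (p + 1 + int (Suc e))) = a + 1" using xa 4 by (simp add: add_ac)
    have w_left: "factor f p (Suc e) = Y # u" using 4 by (simp add: factor_Cons u_def)
    have w_right: "factor f (p + 1) (Suc e) = u @ [X]" using 4 by (simp add: factor_snoc u_def)
    have w_all: "factor f p d = Y # u @ [X]" using 4 w_right by (simp add: factor_Cons)
    have "int (t (a, b + 1)) = top_entry u" using less[of e "p + 1"] 4 yb a_def u_def by simp
    moreover have "int (t (a, b)) = top_entry (Y # u)"
      using less[of "Suc e" p] 4 w_left xa' b_def by simp
    moreover have "int (t (a + 1, b + 1)) = top_entry (u @ [X])"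
      using less[of "Suc e" "p + 1"] 4 w_right xa1 yb by simp
    ultimately have "int (t (a + 1, b)) = top_entry (Y # u @ [X])"
      using tiling_square_determined[OF rel] top_entry_exchange by blast
    then show ?thesis using xa w_all b_def by simp
  qed
qed

definition mirrored :: "(int \<Rightarrow> letter) \<Rightarrow> int \<Rightarrow> int \<Rightarrow> bool" where
  "mirrored f L R \<longleftrightarrow> (\<forall>q::nat. f (L - 1 - int q) = swap_letter (f (R + int q)))"

lemma mirrored_factor:
  assumes "mirrored f L R"
  shows "factor f (L - int m) m = rev (map swap_letter (factor f R m))"
proof (rule nth_equalityI)
  fix q assume "q < length (factor f (L - int m) m)"
  then have q: "q < m" by simp
  have "L - 1 - int (m - Suc q) = L - int m + int q" using q by (simp add: of_nat_diff)
  then have "f (L - int m + int q) = swap_letter (f (R + int (m - Suc q)))"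
    using assms unfolding mirrored_def by metis
  then show "factor f (L - int m) m ! q = rev (map swap_letter (factor f R m)) ! q"
    using q by (simp add: nth_factor rev_nth)
qed simp

lemma mirrored_letter: "mirrored f L R \<Longrightarrow> f (L - int m - 1) = swap_letter (f (R + int m))"
  unfolding mirrored_def by (metis diff_right_commute)

lemma count_list_transp: "count_list (rev (map swap_letter v)) Y = count_list v X"
  by (induct v) (auto elim: swap_letter.elims)

lemma mirrored_path_descent:
  assumes "mirrored f L R"
  shows "snd (path_pt f (L - int m)) = snd (path_pt f L) - int (count_list (factor f R m) X)"
  using path_pt_add[of f "L - int m" m] mirrored_factor[OF assms, of m] count_list_transp by simp

text \<open>Top entries of words palindromic up to transposition around a centre whose matrix is
persymmetric; these give the tiling values on the diagonals below a mirrored factor.\<close>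
lemma top_entry_mirrored_word:
  assumes C: "word_mat c = (cc, cc + e, cc - e, cc)"
  shows "top_entry (rev (map swap_letter W) @ c @ W) = cc * (top_entry (Y # W))^2"
    and "top_entry (Y # rev (map swap_letter W) @ c @ W) = cc * top_entry (Y # W) * top_entry (Y # W @ [X]) - e"
    and "top_entry (rev (map swap_letter W) @ c @ W @ [X]) = cc * top_entry (Y # W) * top_entry (Y # W @ [X]) + e"
proof -
  obtain p q r s where M: "word_mat W = (p, q, r, s)" by (cases "word_mat W") auto
  have d: "p*s - q*r = 1" using mat_det_word_mat[of W] M by simp
  show "top_entry (rev (map swap_letter W) @ c @ W) = cc * (top_entry (Y # W))^2"
    by (simp add: top_entry_def word_mat_append word_mat_transp M C power2_eq_square algebra_simps)
  have "top_entry (Y # rev (map swap_letter W) @ c @ W) - (cc * top_entry (Y # W) * top_entry (Y # W @ [X]) - e)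
      = e * (1 - (p*s - q*r))"
    by (simp add: top_entry_def word_mat_append word_mat_transp M C algebra_simps)
  then show "top_entry (Y # rev (map swap_letter W) @ c @ W) = cc * top_entry (Y # W) * top_entry (Y # W @ [X]) - e"
    using d by simp
  have "top_entry (rev (map swap_letter W) @ c @ W @ [X]) - (cc * top_entry (Y # W) * top_entry (Y # W @ [X]) + e)
      = e * ((p*s - q*r) - 1)"
    by (simp add: top_entry_def word_mat_append word_mat_transp M C algebra_simps)
  then show "top_entry (rev (map swap_letter W) @ c @ W @ [X]) = cc * top_entry (Y # W) * top_entry (Y # W @ [X]) + e"
    using d by simp
qed

text \<open>Tiling values below a mirrored factor c: the hook of the word W^t c W (W the m letters
after c, ending before an x) lies at the point n steps right of R and n steps below L,
where n is the number of x's in W; one more letter on either side gives its neighbours.\<close>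
lemma mirrored_center_values:
  assumes til: "is_ext_tiling f t" and mir: "mirrored f L R" and LR: "L \<le> R"
    and C: "word_mat (factor f L (nat (R - L))) = (cc, cc + e, cc - e, cc)"
    and fX: "f (R + int m) = X"
  defines "W \<equiv> factor f R m" and "n \<equiv> int (count_list (factor f R m) X)"
  shows "int (t (fst (path_pt f R) + n, snd (path_pt f L) - n)) = cc * (top_entry (Y # W))^2"
    and "int (t (fst (path_pt f R) + n, snd (path_pt f L) - n - 1))
           = cc * top_entry (Y # W) * top_entry (Y # W @ [X]) - e"
    and "int (t (fst (path_pt f R) + n + 1, snd (path_pt f L) - n))
           = cc * top_entry (Y # W) * top_entry (Y # W @ [X]) + e"
proof -
  define D where "D = nat (R - L)"
  define V where "V = rev (map swap_letter W) @ factor f L D @ W"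
  note hook = hook_formula[OF til]
  have LD: "L + int D = R" using LR D_def by simp
  have xR: "fst (path_pt f (R + int m)) = fst (path_pt f R) + n"
    using path_pt_add[of f R m] n_def by simp
  have xR1: "fst (path_pt f (R + int m + 1)) = fst (path_pt f R) + n + 1"
    using path_pt_step[of f "R + int m"] fX xR by simp
  have yL: "snd (path_pt f (L - int m)) = snd (path_pt f L) - n"
    using mirrored_path_descent[OF mir] n_def by simp
  have fY: "f (L - int m - 1) = Y" using mirrored_letter[OF mir, of m] fX by simp
  have yL1: "snd (path_pt f (L - int m - 1)) = snd (path_pt f L) - n - 1"
    using path_pt_step[of f "L - int m - 1"] fY yL by simp
  have V: "factor f (L - int m) (m + D + m) = V"
    using mirrored_factor[OF mir] LD by (simp add: factor_add V_def W_def)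
  have end1: "L - int m + int (m + D + m) = R + int m" using LD by simp
  have "int (t (fst (path_pt f R) + n, snd (path_pt f L) - n)) = top_entry V"
    using hook[of "L - int m" "m + D + m"] xR yL by (simp only: end1 V)
  then show "int (t (fst (path_pt f R) + n, snd (path_pt f L) - n)) = cc * (top_entry (Y # W))^2"
    using top_entry_mirrored_word(1)[OF C] by (simp add: V_def D_def)
  have V2: "factor f (L - int m - 1) (1 + (m + D + m)) = Y # V"
    using V fY by (simp add: factor_add factor_Cons)
  have end2: "L - int m - 1 + int (1 + (m + D + m)) = R + int m" using LD by simp
  have "int (t (fst (path_pt f R) + n, snd (path_pt f L) - n - 1)) = top_entry (Y # V)"
    using hook[of "L - int m - 1" "1 + (m + D + m)"] xR yL1 by (simp only: end2 V2)
  then show "int (t (fst (path_pt f R) + n, snd (path_pt f L) - n - 1))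
      = cc * top_entry (Y # W) * top_entry (Y # W @ [X]) - e"
    using top_entry_mirrored_word(2)[OF C] by (simp add: V_def D_def)
  have V3: "factor f (L - int m) (m + D + m + 1) = V @ [X]"
    using V fX end1 by (simp only: factor_add) (simp add: factor_Cons)
  have end3: "L - int m + int (m + D + m + 1) = R + int m + 1" using LD by simp
  have "int (t (fst (path_pt f R) + n + 1, snd (path_pt f L) - n)) = top_entry (V @ [X])"
    using hook[of "L - int m" "m + D + m + 1"] xR1 yL by (simp only: end3 V3)
  then show "int (t (fst (path_pt f R) + n + 1, snd (path_pt f L) - n))
      = cc * top_entry (Y # W) * top_entry (Y # W @ [X]) + e"
    using top_entry_mirrored_word(3)[OF C] by (simp add: V_def D_def)
qed

lemma X_occurrence_with_count:
  assumes infX: "\<forall>M. \<exists>i\<ge>M. f i = X"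
  shows "\<exists>m. count_list (factor f R m) X = n \<and> f (R + int m) = X"
proof -
  have next_X: "\<exists>j. f (R + int (a + j)) = X \<and> count_list (factor f R (a + j)) X = count_list (factor f R a) X"
    for a
  proof -
    obtain i where i: "i \<ge> R + int a" "f i = X" using infX by blast
    define j where "j = (LEAST j. f (R + int (a + j)) = X)"
    have "f (R + int (a + nat (i - R - int a))) = X" using i by simp
    then have fj: "f (R + int (a + j)) = X" unfolding j_def by (rule LeastI)
    have "X \<notin> set (factor f (R + int a) j)"
    proof
      assume "X \<in> set (factor f (R + int a) j)"
      then obtain q where "q < j" "f (R + int a + int q) = X" by (auto simp: in_set_conv_nth nth_factor)
      then show False using not_less_Least[of q "\<lambda>j. f (R + int (a + j)) = X"] j_def by (simp add: add.assoc)
    qed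
    then show ?thesis using fj by (auto simp: factor_add)
  qed
  show ?thesis
  proof (induct n)
    case 0
    show ?case using next_X[of 0] by auto
  next
    case (Suc n)
    then obtain m where m: "count_list (factor f R m) X = n" "f (R + int m) = X" by blast
    then have "count_list (factor f R (m + 1)) X = Suc n" by (simp add: factor_snoc)
    then show ?case using next_X[of "m + 1"] by auto
  qed
qed

lemma word_mat_replicate_X: "word_mat (replicate h X) = (1, 0, int h, 1)"
  by (induct h) (auto simp: algebra_simps)

lemma word_mat_replicate_Y: "word_mat (replicate h Y) = (1, int h, 0, 1)"
  by (induct h) (auto simp: algebra_simps)

lemma row_hook_values:
  assumes til: "is_ext_tiling f t" and fY: "f (R - 1) = Y" and fX: "f (R + int m) = X"
  defines "W \<equiv> factor f R m" and "n \<equiv> int (count_list (factor f R m) X)"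
  shows "int (t (fst (path_pt f R) + n, snd (path_pt f (R - 1)))) = top_entry (Y # W)"
    and "int (t (fst (path_pt f R) + n + 1, snd (path_pt f (R - 1)))) = top_entry (Y # W @ [X])"
proof -
  note hook = hook_formula[OF til]
  have xm: "fst (path_pt f (R + int m)) = fst (path_pt f R) + n" using path_pt_add[of f R m] n_def by simp
  have e1: "R - 1 + int (Suc m) = R + int m" by simp
  show "int (t (fst (path_pt f R) + n, snd (path_pt f (R - 1)))) = top_entry (Y # W)"
    using hook[of "R - 1" "Suc m"] fY xm unfolding e1 by (simp add: factor_Cons W_def)
  have e2: "R - 1 + int (Suc m + 1) = R + int m + 1" by simp
  have "factor f (R - 1) (Suc m + 1) = Y # W @ [X]" using fY fX e1
    by (simp only: factor_add) (simp add: factor_Cons W_def)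
  then show "int (t (fst (path_pt f R) + n + 1, snd (path_pt f (R - 1)))) = top_entry (Y # W @ [X])"
    using hook[of "R - 1" "Suc m + 1"] path_pt_step[of f "R + int m"] fX xm
    unfolding e2 by (simp add: add_ac)
qed

lemma column_hook_values:
  assumes til: "is_ext_tiling f t" and mir: "mirrored f L R"
    and fL: "f L = X" and fX: "f (R + int m) = X"
  defines "W \<equiv> factor f R m" and "n \<equiv> int (count_list (factor f R m) X)"
  shows "int (t (fst (path_pt f (L + 1)), snd (path_pt f L) - n)) = top_entry (Y # W)"
    and "int (t (fst (path_pt f (L + 1)), snd (path_pt f L) - n - 1)) = top_entry (Y # W @ [X])"
proof -
  note hook = hook_formula[OF til]
  have ym: "snd (path_pt f (L - int m)) = snd (path_pt f L) - n"
    using mirrored_path_descent[OF mir, of m] n_def by simp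
  have fY: "f (L - int m - 1) = Y" using mirrored_letter[OF mir, of m] fX by simp
  have left: "factor f (L - int m) (m + 1) = rev (map swap_letter (Y # W))"
    using mirrored_factor[OF mir, of m] fL by (simp only: factor_add) (simp add: factor_Cons W_def)
  have e1: "L - int m + int (m + 1) = L + 1" by simp
  show "int (t (fst (path_pt f (L + 1)), snd (path_pt f L) - n)) = top_entry (Y # W)"
    using hook[of "L - int m" "m + 1"] ym unfolding e1 left top_entry_transp by simp
  have w: "factor f (L - int m - 1) (Suc (m + 1)) = rev (map swap_letter (Y # W @ [X]))"
    using left fY by (simp add: factor_Cons)
  have e2: "L - int m - 1 + int (Suc (m + 1)) = L + 1" by simp
  have y: "snd (path_pt f (L - int m - 1)) = snd (path_pt f L) - n - 1"
    using path_pt_step[of f "L - int m - 1"] fY ym by simp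
  show "int (t (fst (path_pt f (L + 1)), snd (path_pt f L) - n - 1)) = top_entry (Y # W @ [X])"
    using hook[of "L - int m - 1" "Suc (m + 1)"] unfolding e2 w y top_entry_transp .
qed

lemma center_Y_diagonals:
  assumes til: "is_ext_tiling f t" and mir: "mirrored f L R"
    and c: "factor f L (h + 2) = Y # replicate h X @ [Y]" and R: "R = L + int h + 2"
    and infX: "\<forall>M. \<exists>i\<ge>M. f i = X"
  defines "I \<equiv> path_pt f (R - 1)"
  shows "t (shift (shift I 0 (-1)) (int n) (- int n)) = (h + 1) * (t (shift I (int n) 0))\<^sup>2"
    and "t (shift (shift I 0 (-2)) (int n) (- int n)) + 1
           = (h + 1) * t (shift I (int n) 0) * t (shift I (int (n + 1)) 0)"
proof -
  obtain m where cnt: "count_list (factor f R m) X = n" and fX: "f (R + int m) = X"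
    using X_occurrence_with_count[OF infX] by blast
  define W where "W = factor f R m"
  have cntW: "count_list W X = n" using cnt W_def by simp
  have C: "word_mat (factor f L (nat (R - L))) = (int h + 1, (int h + 1) + 1, (int h + 1) - 1, int h + 1)"
    using c R by (simp add: nat_add_distrib word_mat_append word_mat_replicate_X algebra_simps)
  have LR: "L \<le> R" using R by simp
  have fY: "f (R - 1) = Y" using nth_factor[of "h + 1" "h + 2" f L] c R by (simp add: nth_append add_ac)
  note V = mirrored_center_values[OF til mir LR C fX, folded W_def, unfolded cntW]
  note H = row_hook_values[OF til fY fX, folded W_def I_def, unfolded cntW]
  have xI: "fst (path_pt f R) = fst I" using path_pt_step[of f "R - 1"] fY I_def by simp
  have "factor f L (h + 1) = Y # replicate h X"
    using arg_cong[OF c, of "take (h + 1)"] factor_add[of f L "h + 1" 1] by simp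
  then have yI: "snd (path_pt f L) = snd I - 1"
    using path_pt_add[of f L "h + 1"] R I_def by (simp add: add_ac)
  have i0: "int (t (shift I (int n) 0)) = top_entry (Y # W)" and
    i1: "int (t (shift I (int (n + 1)) 0)) = top_entry (Y # W @ [X])"
    using H xI by (simp_all add: shift_def add_ac)
  have "int (t (shift (shift I 0 (-1)) (int n) (- int n))) = int ((h + 1) * (t (shift I (int n) 0))\<^sup>2)"
    using V(1) xI yI i0 by (simp add: shift_def algebra_simps)
  then show "t (shift (shift I 0 (-1)) (int n) (- int n)) = (h + 1) * (t (shift I (int n) 0))\<^sup>2"
    by (simp only: of_nat_eq_iff)
  have "int (t (shift (shift I 0 (-2)) (int n) (- int n)) + 1)
      = int ((h + 1) * t (shift I (int n) 0) * t (shift I (int (n + 1)) 0))"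
    using V(2) xI yI i0 i1 by (simp add: shift_def algebra_simps)
  then show "t (shift (shift I 0 (-2)) (int n) (- int n)) + 1
           = (h + 1) * t (shift I (int n) 0) * t (shift I (int (n + 1)) 0)"
    by (simp only: of_nat_eq_iff)
qed

lemma center_X_diagonals:
  assumes til: "is_ext_tiling f t" and mir: "mirrored f L R"
    and c: "factor f L (h + 2) = X # replicate h Y @ [X]" and R: "R = L + int h + 2"
    and infX: "\<forall>M. \<exists>i\<ge>M. f i = X"
  defines "I \<equiv> path_pt f (L + 1)"
  shows "t (shift (shift I 1 0) (int n) (- int n)) = (h + 1) * (t (shift I 0 (- int n)))\<^sup>2"
    and "t (shift (shift I 2 0) (int n) (- int n)) + 1
           = (h + 1) * t (shift I 0 (- int n)) * t (shift I 0 (- int (n + 1)))"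
proof -
  obtain m where cnt: "count_list (factor f R m) X = n" and fX: "f (R + int m) = X"
    using X_occurrence_with_count[OF infX] by blast
  define W where "W = factor f R m"
  have cntW: "count_list W X = n" using cnt W_def by simp
  have C: "word_mat (factor f L (nat (R - L))) = (int h + 1, (int h + 1) + -1, (int h + 1) - -1, int h + 1)"
    using c R by (simp add: nat_add_distrib word_mat_append word_mat_replicate_Y algebra_simps)
  have LR: "L \<le> R" using R by simp
  have fL: "f L = X" using nth_factor[of 0 "h + 2" f L] c by simp
  note V = mirrored_center_values[OF til mir LR C fX, folded W_def, unfolded cntW]
  note H = column_hook_values[OF til mir fL fX, folded W_def I_def, unfolded cntW]
  have yI: "snd (path_pt f L) = snd I" using path_pt_step[of f L] fL I_def by simp
  have "factor f (L + 1) (h + 1) = replicate h Y @ [X]"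
    using c factor_Cons[of f L "h + 1"] by simp
  then have xI: "fst (path_pt f R) = fst I + 1"
    using path_pt_add[of f "L + 1" "h + 1"] R I_def by (simp add: add_ac)
  have i0: "int (t (shift I 0 (- int n))) = top_entry (Y # W)" and
    i1: "int (t (shift I 0 (- int (n + 1)))) = top_entry (Y # W @ [X])"
    using H yI by (simp_all add: shift_def algebra_simps)
  have "int (t (shift (shift I 1 0) (int n) (- int n))) = int ((h + 1) * (t (shift I 0 (- int n)))\<^sup>2)"
    using V(1) xI yI i0 by (simp add: shift_def algebra_simps)
  then show "t (shift (shift I 1 0) (int n) (- int n)) = (h + 1) * (t (shift I 0 (- int n)))\<^sup>2"
    by (simp only: of_nat_eq_iff)
  have "int (t (shift (shift I 2 0) (int n) (- int n)) + 1)
      = int ((h + 1) * t (shift I 0 (- int n)) * t (shift I 0 (- int (n + 1))))"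
    using V(3) xI yI i0 i1 by (simp add: shift_def algebra_simps)
  then show "t (shift (shift I 2 0) (int n) (- int n)) + 1
           = (h + 1) * t (shift I 0 (- int n)) * t (shift I 0 (- int (n + 1)))"
    by (simp only: of_nat_eq_iff)
qed

lemma diagonal_exchange:
  fixes t :: "int \<times> int \<Rightarrow> nat" and f :: "int \<Rightarrow> letter"
  assumes rel: "\<forall>a b. t (a, b + 1) * t (a + 1, b) = t (a, b) * t (a + 1, b + 1) + 1"
  defines "d \<equiv> \<lambda>q (n::nat). t (shift (path_pt f q) (int n) (- int n))"
  shows "d p n * d p (n + 1) = 1 +
           (case (f (p - 1), f p) of
              (X, X) \<Rightarrow> d (p - 1) (n + 1) * d (p + 1) n
            | (X, Y) \<Rightarrow> d (p - 1) (n + 1) * d (p + 1) (n + 1)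
            | (Y, X) \<Rightarrow> d (p - 1) n * d (p + 1) n
            | (Y, Y) \<Rightarrow> d (p - 1) n * d (p + 1) (n + 1))"
proof -
  obtain x y where P: "path_pt f p = (x, y)" by (cases "path_pt f p") auto
  have prev: "path_pt f (p - 1) = (if f (p - 1) = X then (x - 1, y) else (x, y - 1))"
    using path_pt_step[of f "p - 1"] P by (auto simp: prod_eq_iff)
  have succ: "path_pt f (p + 1) = (if f p = X then (x + 1, y) else (x, y + 1))"
    using path_pt_step[of f p] P by auto
  have "t (x + int n, y - int n - 1 + 1) * t (x + int n + 1, y - int n - 1) =
      t (x + int n, y - int n - 1) * t (x + int n + 1, y - int n - 1 + 1) + 1" using rel by blast
  then show ?thesis using P prev succ
    by (cases "f (p - 1)"; cases "f p") (simp_all add: d_def shift_def algebra_simps)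
qed

lemma frontier_nth: "q < length m \<Longrightarrow> frontier s' m s (int q) = m ! q"
  by (simp add: frontier_def prepend_fin_def)

lemma factor_frontier:
  "a + d \<le> length m \<Longrightarrow> factor (frontier s' m s) (int a) d = take d (drop a m)"
  by (rule nth_equalityI) (simp_all add: nth_factor frontier_def prepend_fin_def flip: of_nat_add)

lemma frontier_nth_middle:
  "q < length w \<Longrightarrow> frontier s' (u @ w @ v) s (int (length u + q)) = w ! q"
  by (subst frontier_nth) (simp_all add: nth_append)

text \<open>The two transposition hypotheses of the theorem say exactly that the frontier is
mirrored about the factors v (first one) and u (second one) of s' u v s.\<close>
lemma mirrored_frontier_right:
  assumes "transp s = append_fin s' u"
  shows "mirrored (frontier s' (u @ v) s) (int (length u)) (int (length (u @ v)))"
  unfolding mirrored_def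
proof
  fix q :: nat
  have "swap_letter (s q) = append_fin s' u q" using fun_cong[OF assms, of q] by (simp add: transp_def)
  moreover have "frontier s' (u @ v) s (int (length u) - 1 - int q) = append_fin s' u q"
  proof (cases "q < length u")
    case True
    then have e: "int (length u) - 1 - int q = int (length u - 1 - q)" by simp
    have "frontier s' (u @ v) s (int (length u - 1 - q)) = (u @ v) ! (length u - 1 - q)"
      using True by (intro frontier_nth) simp
    moreover have "length u - Suc q < length u" using True by simp
    ultimately show ?thesis unfolding e using True by (simp add: nth_append append_fin_def rev_nth)
  next
    case False
    then have e: "int (length u) - 1 - int q = - 1 - int (q - length u)" by simp
    have "nat (int q - int (length u)) = q - length u" using False by simp
    then show ?thesis unfolding e using False by (simp add: frontier_def append_fin_def)
  qed
  moreover have "frontier s' (u @ v) s (int (length (u @ v)) + int q) = s q"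
    by (simp add: frontier_def prepend_fin_def nat_add_distrib)
  ultimately show "frontier s' (u @ v) s (int (length u) - 1 - int q)
      = swap_letter (frontier s' (u @ v) s (int (length (u @ v)) + int q))" by simp
qed

lemma swap_letter_swap_letter [simp]: "swap_letter (swap_letter c) = c"
  by (cases c) auto

lemma mirrored_frontier_left:
  assumes "transp s' = prepend_fin v s"
  shows "mirrored (frontier s' (u @ v) s) 0 (int (length u))"
  unfolding mirrored_def
proof
  fix q :: nat
  have "frontier s' (u @ v) s (int (length u) + int q) = prepend_fin v s q"
    by (simp add: frontier_def prepend_fin_def nth_append nat_add_distrib)
  also have "\<dots> = swap_letter (s' q)" using fun_cong[OF assms, of q] by (simp add: transp_def)
  finally show "frontier s' (u @ v) s (0 - 1 - int q)
      = swap_letter (frontier s' (u @ v) s (int (length u) + int q))"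
    by (simp add: frontier_def)
qed

text \<open>Admissibility is only used through this consequence: x occurs arbitrarily far right.\<close>
lemma admissible_X_unbounded:
  assumes "admissible f"
  shows "\<forall>M. \<exists>i\<ge>M. f i = X"
proof
  fix M
  have "\<not> (\<forall>i\<ge>M. f i = Y)" using assms unfolding admissible_def by blast
  then show "\<exists>i\<ge>M. f i = X" by (metis letter.exhaust)
qed

theorem lemma3:
  fixes h h' :: nat and w :: "letter list" and s s' :: "nat \<Rightarrow> letter"
    and t :: "int \<times> int \<Rightarrow> nat"
  defines "k \<equiv> length w"
  defines "f \<equiv> frontier s' ([X] @ replicate h' Y @ [X] @ w @ [Y] @ replicate h X @ [Y]) s"
  defines "P \<equiv> \<lambda>j::nat. path_pt f (int (h' + 2 + j))"
  defines "b \<equiv> \<lambda>(j::nat) (n::nat). t (shift (P j) (int n) (- int n))"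
  defines "I \<equiv> path_pt f (int (h' + k + h + 3))"
  defines "I' \<equiv> path_pt f 1"
  defines "J \<equiv> shift I 0 (-1)" and "K \<equiv> shift I 0 (-2)"
  defines "J' \<equiv> shift I' 1 0" and "K' \<equiv> shift I' 2 0"
  defines "i \<equiv> \<lambda>n::nat. t (shift I (int n) 0)"
  defines "i' \<equiv> \<lambda>n::nat. t (shift I' 0 (- int n))"
  defines "jj \<equiv> \<lambda>n::nat. t (shift J (int n) (- int n))"
  defines "kk \<equiv> \<lambda>n::nat. t (shift K (int n) (- int n))"
  defines "jj' \<equiv> \<lambda>n::nat. t (shift J' (int n) (- int n))"
  defines "kk' \<equiv> \<lambda>n::nat. t (shift K' (int n) (- int n))"
  assumes "transp s = append_fin s' ([X] @ replicate h' Y @ [X] @ w)"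
    and "transp s' = prepend_fin (w @ [Y] @ replicate h X @ [Y]) s"
    and "admissible f"
    and "is_ext_tiling f t"
  shows "\<forall>n::nat.
      jj n = (h + 1) * (i n)\<^sup>2 \<and>
      kk n + 1 = (h + 1) * i n * i (n + 1) \<and>
      jj' n = (h' + 1) * (i' n)\<^sup>2 \<and>
      kk' n + 1 = (h' + 1) * i' n * i' (n + 1) \<and>
      (\<forall>j\<in>{1..k - 1}.
         b j n * b j (n + 1) = 1 +
           (case (w ! (j - 1), w ! j) of
              (X, X) \<Rightarrow> b (j - 1) (n + 1) * b (j + 1) n
            | (X, Y) \<Rightarrow> b (j - 1) (n + 1) * b (j + 1) (n + 1)
            | (Y, X) \<Rightarrow> b (j - 1) n * b (j + 1) n
            | (Y, Y) \<Rightarrow> b (j - 1) n * b (j + 1) (n + 1)))"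
proof -
  have til: "is_ext_tiling f t" by fact
  have rel: "\<forall>a b. t (a, b + 1) * t (a + 1, b) = t (a, b) * t (a + 1, b + 1) + 1"
    using til by (simp add: is_ext_tiling_def)
  have infX: "\<forall>M. \<exists>i\<ge>M. f i = X" using admissible_X_unbounded \<open>admissible f\<close> by blast
  have f_split: "f = frontier s' (([X] @ replicate h' Y @ [X]) @ w @ ([Y] @ replicate h X @ [Y])) s"
    by (simp add: f_def)
  have mir1: "mirrored f (int (h' + k + 2)) (int (h' + k + h + 4))"
    using mirrored_frontier_right[OF \<open>transp s = append_fin s' ([X] @ replicate h' Y @ [X] @ w)\<close>,
        where v = "[Y] @ replicate h X @ [Y]"]
    by (simp add: f_def k_def add_ac)
  have mir2: "mirrored f 0 (int (h' + 2))"
    using mirrored_frontier_left[OF \<open>transp s' = prepend_fin (w @ [Y] @ replicate h X @ [Y]) s\<close>,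
        where u = "[X] @ replicate h' Y @ [X]"] by (simp add: f_def)
  have c1: "factor f (int (h' + k + 2)) (h + 2) = Y # replicate h X @ [Y]"
    using factor_frontier[of "h' + k + 2" "h + 2"] by (simp add: f_def k_def)
  have c2: "factor f 0 (h' + 2) = X # replicate h' Y @ [X]"
    using factor_frontier[of 0 "h' + 2"] by (simp add: f_def)
  have I_eq: "I = path_pt f (int (h' + k + h + 4) - 1)" by (simp add: I_def add_ac)
  have I'_eq: "I' = path_pt f (0 + 1)" by (simp add: I'_def)
  note Yc = center_Y_diagonals[OF til mir1 c1 _ infX, folded I_eq]
  note Xc = center_X_diagonals[OF til mir2 c2 _ infX, folded I'_eq]
  have letter: "f (int (h' + 2 + q)) = w ! q" if "q < k" for q
    using frontier_nth_middle[where u = "[X] @ replicate h' Y @ [X]"] that f_split k_def by simp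
  have diag: "b j n * b j (n + 1) = 1 +
           (case (w ! (j - 1), w ! j) of
              (X, X) \<Rightarrow> b (j - 1) (n + 1) * b (j + 1) n
            | (X, Y) \<Rightarrow> b (j - 1) (n + 1) * b (j + 1) (n + 1)
            | (Y, X) \<Rightarrow> b (j - 1) n * b (j + 1) n
            | (Y, Y) \<Rightarrow> b (j - 1) n * b (j + 1) (n + 1))" if j: "1 \<le> j" "j < k" for j n
  proof -
    define p where "p = int (h' + 2 + j)"
    have "p - 1 = int (h' + 2 + (j - 1))" "P (j - 1) = path_pt f (p - 1)"
      "P j = path_pt f p" "P (j + 1) = path_pt f (p + 1)"
      using j by (simp_all add: P_def p_def of_nat_diff)
    then show ?thesis using diagonal_exchange[OF rel, of f p n] letter[of "j - 1"] letter[of j] j p_def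
      by (cases "w ! (j - 1)"; cases "w ! j") (simp_all add: b_def)
  qed
  show ?thesis
    unfolding jj_def kk_def jj'_def kk'_def i_def i'_def J_def K_def J'_def K'_def
    using Yc Xc diag by auto
qed

end
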